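(* Let $G=(V,E)$ be a directed graph with edge weights $wt$ and no cycle of negative or zero weight, let $x_1,y_1,x_2,y_2\in V$, and let $e=(a,v)\in E$ with $\mathrm{dist}(x_i,y_i)=\mathrm{dist}(x_i,a)+wt(a,v)+\mathrm{dist}(v,y_i)$ for $i=1,2$. Then $$H_{av}(x_1,y_1,x_2,y_2)=F(x_2,a)\cdot z_{av}^2\cdot F_{\mathrm{disj}}(x_1,a,v,y_2)\cdot F(v,y_1).$$
   Context: Introduce an indeterminate $z_e$ (also written $z_{uv}$ for $e=(u,v)$) for each edge; polynomials have coefficients in a field of characteristic two. For a simple path $P$ with edges $e_1,\dots,e_\ell$, $f(P)=\prod_i z_{e_i}$ ($1$ for a single-vertex path). $\Pi(x,y)$ is the set of shortest paths from $x$ to $y$ and $F(x,y)=\sum_{P\in\Pi(x,y)}f(P)$. Paths from $x_1$ to $y_1$ and from $x_2$ to $y_2$ are internally vertex-disjoint if they share no vertex outside $\{x_1,y_1\}\cap\{x_2,y_2\}$; $F_{\mathrm{disj}}(x_1,y_1,x_2,y_2)=\sum f(P_1)f(P_2)$ over internally vertex-disjoint pairs $(P_1,P_2)\in\Pi(x_1,y_1)\times\Pi(x_2,y_2)$. For a path $P$ containing edge $e=(a,v)$ and vertices $x$ before $e$ and $y$ after $e$: $P[x,e]$ denotes the subpath $P[x,a]$ and $P[e,y]$ the subpath $P[v,y]$. $H_{av}(x_1,y_1,x_2,y_2)=\sum f(P_1)f(P_2)$ over pairs $(P_1,P_2)\in\Pi(x_1,y_1)\times\Pi(x_2,y_2)$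 with $e\in E(P_1)\cap E(P_2)$ and $P_1[x_1,e]$, $P_2[e,y_2]$ internally vertex-disjoint. *)

theory Defs
  imports "HOL-Analysis.Analysis" "HOL-Library.Poly_Mapping" "HOL-Library.Multiset"
begin

text \<open>Polynomials in the indeterminates z_e (one per edge e) with coefficients in 'k:
  a polynomial is a finitely supported map from monomials (multisets of edges) to 'k;
  the ring structure is the convolution product of Poly_Mapping.\<close>

type_synonym ('v,'k) epoly = "('v \<times> 'v) multiset \<Rightarrow>\<^sub>0 'k"

definition edges_of :: "'v list \<Rightarrow> ('v \<times> 'v) list" where
  "edges_of P = zip P (tl P)"

definition is_path :: "('v \<times> 'v) set \<Rightarrow> 'v \<Rightarrow> 'v \<Rightarrow> 'v list \<Rightarrow> bool" where
  "is_path E x y P \<longleftrightarrow> P \<noteq> [] \<and> hd P = x \<and> last P = y \<and> distinct P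
     \<and> set (edges_of P) \<subseteq> E"

definition path_weight :: "('v \<times> 'v \<Rightarrow> real) \<Rightarrow> 'v list \<Rightarrow> real" where
  "path_weight wt P = sum_list (map wt (edges_of P))"

definition is_cycle :: "('v \<times> 'v) set \<Rightarrow> 'v list \<Rightarrow> bool" where
  "is_cycle E C \<longleftrightarrow> C \<noteq> [] \<and> distinct C \<and> set (edges_of C) \<subseteq> E \<and> (last C, hd C) \<in> E"

definition cycle_weight :: "('v \<times> 'v \<Rightarrow> real) \<Rightarrow> 'v list \<Rightarrow> real" where
  "cycle_weight wt C = path_weight wt C + wt (last C, hd C)"

text \<open>Distance; +infinity if y is unreachable from x.\<close>

definition gdist :: "('v \<times> 'v) set \<Rightarrow> ('v \<times> 'v \<Rightarrow> real) \<Rightarrow> 'v \<Rightarrow> 'v \<Rightarrow> ereal" where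
  "gdist E wt x y = (INF P \<in> {P. is_path E x y P}. ereal (path_weight wt P))"

definition shortest_paths :: "('v \<times> 'v) set \<Rightarrow> ('v \<times> 'v \<Rightarrow> real) \<Rightarrow> 'v \<Rightarrow> 'v \<Rightarrow> 'v list set" where
  "shortest_paths E wt x y = {P. is_path E x y P \<and> ereal (path_weight wt P) = gdist E wt x y}"

definition fmono :: "'v list \<Rightarrow> ('v,'k::zero_neq_one) epoly" where
  "fmono P = Poly_Mapping.single (mset (edges_of P)) 1"

definition Fsum :: "('v \<times> 'v) set \<Rightarrow> ('v \<times> 'v \<Rightarrow> real) \<Rightarrow> 'v \<Rightarrow> 'v \<Rightarrow> ('v,'k::comm_ring_1) epoly" where
  "Fsum E wt x y = (\<Sum>P \<in> shortest_paths E wt x y. fmono P)"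

definition int_disjoint :: "'v \<Rightarrow> 'v \<Rightarrow> 'v list \<Rightarrow> 'v \<Rightarrow> 'v \<Rightarrow> 'v list \<Rightarrow> bool" where
  "int_disjoint x1 y1 P1 x2 y2 P2 \<longleftrightarrow> set P1 \<inter> set P2 \<subseteq> {x1, y1} \<inter> {x2, y2}"

definition Fdisj :: "('v \<times> 'v) set \<Rightarrow> ('v \<times> 'v \<Rightarrow> real) \<Rightarrow> 'v \<Rightarrow> 'v \<Rightarrow> 'v \<Rightarrow> 'v \<Rightarrow> ('v,'k::comm_ring_1) epoly" where
  "Fdisj E wt x1 y1 x2 y2 =
     (\<Sum>(P1,P2) \<in> {(P1,P2). P1 \<in> shortest_paths E wt x1 y1 \<and> P2 \<in> shortest_paths E wt x2 y2
                        \<and> int_disjoint x1 y1 P1 x2 y2 P2}. fmono P1 * fmono P2)"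

text \<open>For a path P containing edge (a,v): prefix P[x,e] = P[x,a], suffix P[e,y] = P[v,y].\<close>

definition prefix_to :: "'v \<Rightarrow> 'v list \<Rightarrow> 'v list" where
  "prefix_to a P = takeWhile (\<lambda>u. u \<noteq> a) P @ [a]"

definition suffix_from :: "'v \<Rightarrow> 'v list \<Rightarrow> 'v list" where
  "suffix_from v P = dropWhile (\<lambda>u. u \<noteq> v) P"

definition Hsum :: "('v \<times> 'v) set \<Rightarrow> ('v \<times> 'v \<Rightarrow> real) \<Rightarrow> 'v \<Rightarrow> 'v \<Rightarrow> 'v \<Rightarrow> 'v \<Rightarrow> 'v \<Rightarrow> 'v \<Rightarrow> ('v,'k::comm_ring_1) epoly" where
  "Hsum E wt a v x1 y1 x2 y2 =
     (\<Sum>(P1,P2) \<in> {(P1,P2). P1 \<in> shortest_paths E wt x1 y1 \<and> P2 \<in> shortest_paths E wt x2 y2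
                        \<and> (a,v) \<in> set (edges_of P1) \<and> (a,v) \<in> set (edges_of P2)
                        \<and> int_disjoint x1 a (prefix_to a P1) v y2 (suffix_from v P2)}.
        fmono P1 * fmono P2)"

end

theory Submission
  imports Defs
begin

text \<open>Cutting a pair \<open>(P\<^sub>1, P\<^sub>2)\<close> counted by \<open>H\<^sub>a\<^sub>v\<close> at the common edge \<open>(a, v)\<close> yields the four
  pieces \<open>P\<^sub>2[x\<^sub>2, a]\<close>, \<open>P\<^sub>1[x\<^sub>1, a]\<close>, \<open>P\<^sub>2[v, y\<^sub>2]\<close>, \<open>P\<^sub>1[v, y\<^sub>1]\<close>. The distance hypotheses make
  them shortest paths, and conversely, since all cycles have positive weight, gluing arbitrary
  shortest pieces through \<open>(a, v)\<close> gives simple shortest paths again. The resulting bijection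
  respects the monomials.\<close>

lemma edges_of_simps [simp]:
  "edges_of [] = []" "edges_of [x] = []" "edges_of (x # y # zs) = (x, y) # edges_of (y # zs)"
  by (simp_all add: edges_of_def)

lemma edges_of_append_Cons:
  "edges_of (xs @ y # ys) = edges_of (xs @ [y]) @ edges_of (y # ys)"
  by (induction xs rule: induct_list012) auto

lemma edges_of_snoc:
  "xs \<noteq> [] \<Longrightarrow> edges_of (xs @ [y]) = edges_of xs @ [(last xs, y)]"
  by (induction xs rule: induct_list012) auto

lemma path_weight_simps [simp]:
  "path_weight wt [x] = 0" "path_weight wt (x # y # zs) = wt (x, y) + path_weight wt (y # zs)"
  by (simp_all add: path_weight_def)

lemma path_weight_append_Cons:
  "path_weight wt (xs @ y # ys) = path_weight wt (xs @ [y]) + path_weight wt (y # ys)"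
  unfolding path_weight_def by (subst edges_of_append_Cons) simp

lemma path_weight_snoc:
  "xs \<noteq> [] \<Longrightarrow> path_weight wt (xs @ [y]) = path_weight wt xs + wt (last xs, y)"
  unfolding path_weight_def by (simp add: edges_of_snoc)

lemma fmono_append_edge:
  "(fmono (A @ a # v # B) :: ('v, 'k::comm_ring_1) epoly)
     = fmono (A @ [a]) * fmono [a, v] * fmono (v # B)"
proof -
  have "edges_of (A @ a # v # B) = edges_of (A @ [a]) @ [(a, v)] @ edges_of (v # B)"
    by (subst edges_of_append_Cons) simp
  then show ?thesis unfolding fmono_def by (simp add: mult_single add.assoc)
qed

lemma in_set_edges_ofE:
  assumes "(a, v) \<in> set (edges_of P)"
  obtains A B where "P = A @ a # v # B"
proof -
  from assms have "\<exists>A B. P = A @ a # v # B"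
  proof (induction P rule: induct_list012)
    case (3 x y zs)
    show ?case
    proof (cases "(x, y) = (a, v)")
      case False
      with 3 obtain A B where "y # zs = A @ a # v # B" by auto
      then show ?thesis by (metis append_Cons)
    qed auto
  qed auto
  with that show ?thesis by blast
qed

lemma prefix_to_suffix_from_distinct:
  assumes "distinct (A @ a # v # B)"
  shows "prefix_to a (A @ a # v # B) = A @ [a]" "suffix_from v (A @ a # v # B) = v # B"
  using assms by (auto simp: prefix_to_def suffix_from_def takeWhile_append dropWhile_append)

lemma not_distinct_decomp_simple_loop:
  assumes "\<not> distinct W"
  obtains A u B C where "W = A @ [u] @ B @ [u] @ C" and "distinct (u # B)"
proof -
  have simple_loop: "\<exists>A u B C. W = A @ [u] @ B @ [u] @ C \<and> distinct (u # B)"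
    if "W = A @ [u] @ B @ [u] @ C" for A u B C
    using that
  proof (induction "length B" arbitrary: A u B C rule: less_induct)
    case less
    show ?case
    proof (cases "distinct (u # B)")
      case True
      then show ?thesis using less.prems by blast
    next
      case False
      then consider B1 B2 where "B = B1 @ u # B2"
        | B1 y B2 B3 where "B = B1 @ [y] @ B2 @ [y] @ B3"
        by (metis distinct.simps(2) not_distinct_decomp split_list)
      then show ?thesis
      proof cases
        case (1 B1 B2)
        then have "W = (A @ [u] @ B1) @ [u] @ B2 @ [u] @ C" "length B2 < length B"
          using less.prems by simp_all
        then show ?thesis using less.hyps by blast
      next
        case (2 B1 y B2 B3)
        then have "W = (A @ [u] @ B1) @ [y] @ B2 @ [y] @ (B3 @ [u] @ C)" "length B2 < length B"
          using less.prems by simp_all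
        then show ?thesis using less.hyps by blast
      qed
    qed
  qed
  obtain A u B C where "W = A @ [u] @ B @ [u] @ C"
    using not_distinct_decomp[OF assms] by blast
  then show ?thesis using that simple_loop by metis
qed

text \<open>Cutting out a simple closed subwalk, which is a cycle of positive weight.\<close>

lemma shorter_walk_if_not_distinct:
  assumes pos: "\<And>C. is_cycle E C \<Longrightarrow> cycle_weight wt C > 0"
    and W: "set (edges_of W) \<subseteq> E" "\<not> distinct W"
  obtains W' where "W' \<noteq> []" "hd W' = hd W" "last W' = last W" "set (edges_of W') \<subseteq> E"
    "path_weight wt W' < path_weight wt W" "length W' < length W"
proof -
  obtain A u B C where W_eq: "W = A @ [u] @ B @ [u] @ C" and dist: "distinct (u # B)"
    using not_distinct_decomp_simple_loop[OF W(2)] .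
  define W' where "W' = A @ u # C"
  have loop_edges: "edges_of (u # B @ [u]) = edges_of (u # B) @ [(last (u # B), u)]"
    using edges_of_snoc[of "u # B" u] by simp
  have edges_W: "edges_of W = edges_of (A @ [u]) @ edges_of (u # B @ [u]) @ edges_of (u # C)"
    unfolding W_eq
    using edges_of_append_Cons[of A u "B @ u # C"] edges_of_append_Cons[of "u # B" u C] by simp
  have edges_W': "edges_of W' = edges_of (A @ [u]) @ edges_of (u # C)"
    unfolding W'_def by (rule edges_of_append_Cons)
  have "is_cycle E (u # B)"
    unfolding is_cycle_def using dist W(1) edges_W loop_edges by auto
  then have "0 < path_weight wt (u # B @ [u])"
    using pos path_weight_snoc[of "u # B" wt u] unfolding cycle_weight_def by fastforce
  moreover have "path_weight wt W
      = path_weight wt (A @ [u]) + path_weight wt (u # B @ [u]) + path_weight wt (u # C)"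
    unfolding W_eq using path_weight_append_Cons[of wt A u "B @ u # C"]
      path_weight_append_Cons[of wt "u # B" u C] by simp
  moreover have "path_weight wt W' = path_weight wt (A @ [u]) + path_weight wt (u # C)"
    unfolding W'_def by (rule path_weight_append_Cons)
  moreover have "hd W' = hd W" "last W' = last W"
    unfolding W'_def W_eq by (cases A; simp)+
  ultimately show ?thesis
    using that[of W'] W(1) edges_W edges_W' unfolding W'_def W_eq by auto
qed

lemma gdist_le_path_weight: "is_path E x y P \<Longrightarrow> gdist E wt x y \<le> ereal (path_weight wt P)"
  unfolding gdist_def by (rule INF_lower) simp

lemma gdist_le_walk_weight:
  assumes pos: "\<And>C. is_cycle E C \<Longrightarrow> cycle_weight wt C > 0"
  shows "W \<noteq> [] \<Longrightarrow> set (edges_of W) \<subseteq> E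
    \<Longrightarrow> gdist E wt (hd W) (last W) \<le> ereal (path_weight wt W)"
proof (induction "length W" arbitrary: W rule: less_induct)
  case less
  show ?case
  proof (cases "distinct W")
    case True
    with less.prems show ?thesis by (intro gdist_le_path_weight) (simp add: is_path_def)
  next
    case False
    with pos less.prems(2) obtain W' where W': "W' \<noteq> []" "hd W' = hd W" "last W' = last W"
      "set (edges_of W') \<subseteq> E" "path_weight wt W' < path_weight wt W" "length W' < length W"
      by (rule shorter_walk_if_not_distinct)
    then have "gdist E wt (hd W) (last W) \<le> ereal (path_weight wt W')"
      using less.hyps by metis
    also have "\<dots> \<le> ereal (path_weight wt W)"
      using W'(5) by simp
    finally show ?thesis .
  qed
qed

lemma shortest_path_snoc:
  assumes "P \<in> shortest_paths E wt x y"
  obtains A where "P = A @ [y]"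
proof
  have "P \<noteq> []" "last P = y"
    using assms unfolding shortest_paths_def is_path_def by simp_all
  then show "P = butlast P @ [y]"
    by (metis append_butlast_last_id)
qed

lemma shortest_path_Cons:
  assumes "P \<in> shortest_paths E wt x y"
  obtains B where "P = x # B"
proof
  have "P \<noteq> []" "hd P = x"
    using assms unfolding shortest_paths_def is_path_def by simp_all
  then show "P = x # tl P"
    by (metis list.collapse)
qed

lemma ereal_sum_eq_upper_bounds:
  fixes d1 d2 :: ereal
  assumes "d1 \<le> ereal p" "d2 \<le> ereal q" "d1 + ereal w + d2 = ereal (p + w + q)"
  shows "d1 = ereal p \<and> d2 = ereal q"
  using assms by (cases d1; cases d2) auto

lemma shortest_paths_split_at_edge:
  assumes P: "P \<in> shortest_paths E wt x y" and e: "(a, v) \<in> set (edges_of P)"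
    and eq: "gdist E wt x y = gdist E wt x a + ereal (wt (a, v)) + gdist E wt v y"
  shows "prefix_to a P \<in> shortest_paths E wt x a" "suffix_from v P \<in> shortest_paths E wt v y"
    and "P = prefix_to a P @ suffix_from v P"
proof -
  obtain A B where P_eq: "P = A @ a # v # B"
    using e by (rule in_set_edges_ofE)
  have path: "is_path E x y P" and weight: "ereal (path_weight wt P) = gdist E wt x y"
    using P unfolding shortest_paths_def by auto
  have edges: "edges_of P = edges_of (A @ [a]) @ edges_of (a # v # B)"
    unfolding P_eq by (rule edges_of_append_Cons)
  have path1: "is_path E x a (A @ [a])" and path2: "is_path E v y (v # B)"
    using path edges unfolding is_path_def P_eq by (cases A; auto)+
  define d1 where "d1 = gdist E wt x a"
  define d2 where "d2 = gdist E wt v y"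
  have "path_weight wt P = path_weight wt (A @ [a]) + wt (a, v) + path_weight wt (v # B)"
    unfolding P_eq path_weight_append_Cons[of wt A a "v # B"] by (simp add: add.assoc)
  then have "d1 + ereal (wt (a, v)) + d2
      = ereal (path_weight wt (A @ [a]) + wt (a, v) + path_weight wt (v # B))"
    using eq weight unfolding d1_def d2_def by simp
  with gdist_le_path_weight[OF path1] gdist_le_path_weight[OF path2]
  have "d1 = ereal (path_weight wt (A @ [a])) \<and> d2 = ereal (path_weight wt (v # B))"
    unfolding d1_def d2_def by (rule ereal_sum_eq_upper_bounds)
  moreover have "distinct (A @ a # v # B)"
    using path unfolding is_path_def P_eq by blast
  ultimately show "prefix_to a P \<in> shortest_paths E wt x a" "suffix_from v P \<in> shortest_paths E wt v y"
    and "P = prefix_to a P @ suffix_from v P"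
    using path1 path2 prefix_to_suffix_from_distinct[of A a v B]
    unfolding shortest_paths_def P_eq d1_def d2_def by simp_all
qed

lemma shortest_paths_join_at_edge:
  assumes pos: "\<And>C. is_cycle E C \<Longrightarrow> cycle_weight wt C > 0"
    and R: "R \<in> shortest_paths E wt x a" and S: "S \<in> shortest_paths E wt v y"
    and e: "(a, v) \<in> E"
    and eq: "gdist E wt x y = gdist E wt x a + ereal (wt (a, v)) + gdist E wt v y"
  shows "R @ S \<in> shortest_paths E wt x y" "(a, v) \<in> set (edges_of (R @ S))"
    and "prefix_to a (R @ S) = R" "suffix_from v (R @ S) = S"
proof -
  obtain A where A: "R = A @ [a]" using R by (rule shortest_path_snoc)
  obtain B where B: "S = v # B" using S by (rule shortest_path_Cons)
  define W where "W = A @ a # v # B"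
  have path1: "is_path E x a (A @ [a])"
    and weight1: "ereal (path_weight wt (A @ [a])) = gdist E wt x a"
    using R unfolding A shortest_paths_def by auto
  have path2: "is_path E v y (v # B)"
    and weight2: "ereal (path_weight wt (v # B)) = gdist E wt v y"
    using S unfolding B shortest_paths_def by auto
  have weight: "ereal (path_weight wt W) = gdist E wt x y"
    using eq path_weight_append_Cons[of wt A a "v # B"] unfolding W_def
    by (simp flip: weight1 weight2)
  have ends: "hd W = x" "last W = y"
    using path1 path2 unfolding W_def is_path_def by (cases A; simp)+
  have edges: "edges_of W = edges_of (A @ [a]) @ (a, v) # edges_of (v # B)"
    unfolding W_def using edges_of_append_Cons[of A a "v # B"] by simp
  then have walk: "W \<noteq> []" "set (edges_of W) \<subseteq> E"
    using path1 path2 e unfolding W_def is_path_def by auto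
  have "distinct W"
  proof (rule ccontr)
    assume "\<not> distinct W"
    with pos walk(2) obtain W' where W': "W' \<noteq> []" "hd W' = hd W" "last W' = last W"
      "set (edges_of W') \<subseteq> E" "path_weight wt W' < path_weight wt W"
      by (rule shorter_walk_if_not_distinct)
    then have "gdist E wt x y \<le> ereal (path_weight wt W')"
      using gdist_le_walk_weight[OF pos W'(1,4)] ends by simp
    then have "path_weight wt W \<le> path_weight wt W'"
      by (simp flip: weight)
    with W'(5) show False by simp
  qed
  with ends walk have "is_path E x y W"
    unfolding is_path_def by blast
  with weight show "R @ S \<in> shortest_paths E wt x y"
    unfolding shortest_paths_def W_def A B by simp
  show "prefix_to a (R @ S) = R" "suffix_from v (R @ S) = S"
    using prefix_to_suffix_from_distinct[of A a v B] \<open>distinct W\<close> unfolding W_def A B by simp_all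
  show "(a, v) \<in> set (edges_of (R @ S))"
    using edges unfolding W_def A B by simp
qed

lemma fmono_append_shortest_paths:
  assumes "R \<in> shortest_paths E wt x a" "S \<in> shortest_paths E wt v y"
  shows "(fmono (R @ S) :: ('v, 'k::comm_ring_1) epoly) = fmono R * fmono [a, v] * fmono S"
proof -
  obtain A where "R = A @ [a]" using assms(1) by (rule shortest_path_snoc)
  moreover obtain B where "S = v # B" using assms(2) by (rule shortest_path_Cons)
  ultimately show ?thesis by (simp add: fmono_append_edge)
qed

lemma bij_betw_glue_at_edge:
  assumes pos: "\<And>C. is_cycle E C \<Longrightarrow> cycle_weight wt C > 0" and e: "(a, v) \<in> E"
    and eq1: "gdist E wt x1 y1 = gdist E wt x1 a + ereal (wt (a, v)) + gdist E wt v y1"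
    and eq2: "gdist E wt x2 y2 = gdist E wt x2 a + ereal (wt (a, v)) + gdist E wt v y2"
  shows "bij_betw (\<lambda>(Q, (R1, R2), S). (R1 @ S, Q @ R2))
    (shortest_paths E wt x2 a
      \<times> {(R1, R2). R1 \<in> shortest_paths E wt x1 a \<and> R2 \<in> shortest_paths E wt v y2
                   \<and> int_disjoint x1 a R1 v y2 R2}
      \<times> shortest_paths E wt v y1)
    {(P1, P2). P1 \<in> shortest_paths E wt x1 y1 \<and> P2 \<in> shortest_paths E wt x2 y2
       \<and> (a, v) \<in> set (edges_of P1) \<and> (a, v) \<in> set (edges_of P2)
       \<and> int_disjoint x1 a (prefix_to a P1) v y2 (suffix_from v P2)}"
proof (rule bij_betw_byWitness
    [where f' = "\<lambda>(P1, P2). (prefix_to a P2, (prefix_to a P1, suffix_from v P2), suffix_from v P1)"],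
    safe)
  fix Q R1 R2 S
  assume Q: "Q \<in> shortest_paths E wt x2 a" and R1: "R1 \<in> shortest_paths E wt x1 a"
    and R2: "R2 \<in> shortest_paths E wt v y2" and S: "S \<in> shortest_paths E wt v y1"
    and disj: "int_disjoint x1 a R1 v y2 R2"
  note join1 = shortest_paths_join_at_edge[OF pos R1 S e eq1]
    and join2 = shortest_paths_join_at_edge[OF pos Q R2 e eq2]
  show "prefix_to a (Q @ R2) = Q" "prefix_to a (R1 @ S) = R1"
    "suffix_from v (Q @ R2) = R2" "suffix_from v (R1 @ S) = S"
    using join1 join2 by simp_all
  show "R1 @ S \<in> shortest_paths E wt x1 y1" "Q @ R2 \<in> shortest_paths E wt x2 y2"
    "(a, v) \<in> set (edges_of (R1 @ S))" "(a, v) \<in> set (edges_of (Q @ R2))"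
    "int_disjoint x1 a (prefix_to a (R1 @ S)) v y2 (suffix_from v (Q @ R2))"
    using join1 join2 disj by simp_all
next
  fix P1 P2
  assume P1: "P1 \<in> shortest_paths E wt x1 y1" "(a, v) \<in> set (edges_of P1)"
    and P2: "P2 \<in> shortest_paths E wt x2 y2" "(a, v) \<in> set (edges_of P2)"
  note split1 = shortest_paths_split_at_edge[OF P1 eq1]
    and split2 = shortest_paths_split_at_edge[OF P2 eq2]
  show "prefix_to a P1 @ suffix_from v P1 = P1" "prefix_to a P2 @ suffix_from v P2 = P2"
    using split1(3) split2(3) by simp_all
  show "prefix_to a P2 \<in> shortest_paths E wt x2 a" "prefix_to a P1 \<in> shortest_paths E wt x1 a"
    "suffix_from v P2 \<in> shortest_paths E wt v y2" "suffix_from v P1 \<in> shortest_paths E wt v y1"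
    using split1 split2 by simp_all
qed

theorem lemma7:
  fixes V :: "'v set" and E :: "('v \<times> 'v) set" and wt :: "'v \<times> 'v \<Rightarrow> real"
    and x1 y1 x2 y2 a v :: 'v
  assumes "finite V" and "E \<subseteq> V \<times> V"
    and "\<And>C. is_cycle E C \<Longrightarrow> cycle_weight wt C > 0"
    and "x1 \<in> V" "y1 \<in> V" "x2 \<in> V" "y2 \<in> V"
    and "(a, v) \<in> E"
    and "gdist E wt x1 y1 = gdist E wt x1 a + ereal (wt (a, v)) + gdist E wt v y1"
    and "gdist E wt x2 y2 = gdist E wt x2 a + ereal (wt (a, v)) + gdist E wt v y2"
    and "(1::'k::field) + 1 = 0"
  shows "(Hsum E wt a v x1 y1 x2 y2 :: ('v,'k) epoly)
       = Fsum E wt x2 a * (fmono [a, v])^2 * Fdisj E wt x1 a v y2 * Fsum E wt v y1"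
proof -
  let ?D = "{(R1, R2). R1 \<in> shortest_paths E wt x1 a \<and> R2 \<in> shortest_paths E wt v y2
                      \<and> int_disjoint x1 a R1 v y2 R2}"
  let ?T = "shortest_paths E wt x2 a \<times> ?D \<times> shortest_paths E wt v y1"
  let ?glue = "\<lambda>(Q, (R1, R2), S). (R1 @ S, Q @ R2)"
  let ?z = "fmono [a, v] :: ('v, 'k) epoly"
  have "Hsum E wt a v x1 y1 x2 y2 = (\<Sum>t\<in>?T. case ?glue t of (P1, P2) \<Rightarrow> fmono P1 * fmono P2)"
    unfolding Hsum_def
    by (rule sum.reindex_bij_betw[OF bij_betw_glue_at_edge[OF assms(3,8-10)],
          where g = "\<lambda>(P1, P2). fmono P1 * fmono P2", symmetric])
  also have "\<dots> = (\<Sum>(Q, R, S)\<in>?T.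
      fmono Q * ?z\<^sup>2 * (case R of (R1, R2) \<Rightarrow> fmono R1 * fmono R2) * fmono S)"
    by (rule sum.cong) (auto simp: fmono_append_shortest_paths power2_eq_square ac_simps)
  also have "\<dots> = (\<Sum>Q\<in>shortest_paths E wt x2 a. \<Sum>R\<in>?D. \<Sum>S\<in>shortest_paths E wt v y1.
      fmono Q * ?z\<^sup>2 * (case R of (R1, R2) \<Rightarrow> fmono R1 * fmono R2) * fmono S)"
    by (simp only: sum.cartesian_product)
  also have "\<dots> = Fsum E wt x2 a * ?z\<^sup>2 * Fdisj E wt x1 a v y2 * Fsum E wt v y1"
    unfolding Fsum_def Fdisj_def
    by (simp only: sum_distrib_left[symmetric] sum_distrib_right[symmetric])
  finally show ?thesis .
qed

end
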